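(* Let $G$ be a strongly antimagic graph, let $k\ge1$, and let $V_k=\{v\in V(G):\deg(v)=k\}$. Let $G'$ be the graph obtained from $G$ by attaching, for each vertex $v\in V_k$, a new vertex $v'$ together with the edge $vv'$ (distinct new vertices for distinct $v$). Then $G'$ is strongly antimagic.
   Context: All graphs are finite and simple. For a graph $G=(V,E)$ and a bijection $f:E\to\{1,\dots,|E|\}$, the vertex sum is $\varphi_f(u)=\sum_{e\in E(u)}f(e)$ with $E(u)$ the set of edges incident to $u$; $f$ is strongly antimagic if the $\varphi_f(u)$ are pairwise distinct over $V$ and $\deg(u)<\deg(v)$ implies $\varphi_f(u)<\varphi_f(v)$; a graph is strongly antimagic if it admits such a labeling. *)

theory Defs
  imports Main
begin

definition simple_graph :: "'a set \<Rightarrow> 'a set set \<Rightarrow> bool" where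
  "simple_graph V E \<longleftrightarrow> finite V \<and>
     (\<forall>e\<in>E. \<exists>u v. u \<noteq> v \<and> u \<in> V \<and> v \<in> V \<and> e = {u, v})"

definition incident_edges :: "'a set set \<Rightarrow> 'a \<Rightarrow> 'a set set" where
  "incident_edges E u = {e \<in> E. u \<in> e}"

definition degree :: "'a set set \<Rightarrow> 'a \<Rightarrow> nat" where
  "degree E u = card (incident_edges E u)"

definition vertex_sum :: "('a set \<Rightarrow> nat) \<Rightarrow> 'a set set \<Rightarrow> 'a \<Rightarrow> nat" where
  "vertex_sum f E u = (\<Sum>e\<in>incident_edges E u. f e)"

definition strongly_antimagic_labeling :: "'a set \<Rightarrow> 'a set set \<Rightarrow> ('a set \<Rightarrow> nat) \<Rightarrow> bool" where
  "strongly_antimagic_labeling V E f \<longleftrightarrow>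
     bij_betw f E {1..card E} \<and>
     inj_on (vertex_sum f E) V \<and>
     (\<forall>u\<in>V. \<forall>v\<in>V. degree E u < degree E v \<longrightarrow> vertex_sum f E u < vertex_sum f E v)"

definition strongly_antimagic :: "'a set \<Rightarrow> 'a set set \<Rightarrow> bool" where
  "strongly_antimagic V E \<longleftrightarrow> (\<exists>f. strongly_antimagic_labeling V E f)"

end

theory Submission
  imports Defs
begin

text \<open>Shift every label of an antimagic labelling of \<open>G\<close> up by \<open>r = |V\<^sub>k|\<close> and give
  the \<open>r\<close> pendant edges the labels \<open>1..r\<close>, ordered like the vertex sums of their old endpoints.
  An old vertex of degree \<open>d\<close> gains \<open>r d\<close> from the shift, and a vertex of \<open>V\<^sub>k\<close> additionally
  at most \<open>r\<close> from its pendant edge; since \<open>r\<close> never exceeds the gain of one more degree,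
  sums stay increasing in the degree and distinct within a degree class. The new leaves
  have sums in \<open>1..r\<close>, strictly between isolated vertices (sum \<open>0\<close>) and all other old
  vertices (sum \<open>> r\<close>).\<close>

lemma simple_graph_edge_subset: "simple_graph V E \<Longrightarrow> e \<in> E \<Longrightarrow> e \<subseteq> V"
  unfolding simple_graph_def by fastforce

lemma simple_graph_finite_edges:
  assumes "simple_graph V E" shows "finite E"
proof (rule finite_subset)
  show "E \<subseteq> Pow V" using simple_graph_edge_subset[OF assms] by blast
  have "finite V" using assms unfolding simple_graph_def by blast
  then show "finite (Pow V)" by simp
qed

lemma finite_incident_edges: "finite E \<Longrightarrow> finite (incident_edges E u)"
  by (simp add: incident_edges_def)

lemma degree_le_vertex_sum:
  assumes "finite E" and "\<And>e. e \<in> E \<Longrightarrow> 1 \<le> f e"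
  shows "degree E u \<le> vertex_sum f E u"
proof -
  have "degree E u = (\<Sum>e\<in>incident_edges E u. 1)" by (simp add: degree_def)
  also have "\<dots> \<le> (\<Sum>e\<in>incident_edges E u. f e)"
    by (rule sum_mono) (use assms(2) in \<open>auto simp: incident_edges_def\<close>)
  finally show ?thesis by (simp add: vertex_sum_def)
qed

lemma vertex_sum_degree_0: "finite E \<Longrightarrow> degree E u = 0 \<Longrightarrow> vertex_sum f E u = 0"
  by (simp add: degree_def vertex_sum_def finite_incident_edges)

lemma vertex_sum_add_const:
  "vertex_sum (\<lambda>e. f e + c) E u = vertex_sum f E u + c * degree E u"
  by (simp add: vertex_sum_def degree_def sum.distrib mult.commute)

definition sum_degree_less :: "('a set \<Rightarrow> nat) \<Rightarrow> 'a set set \<Rightarrow> 'a \<Rightarrow> 'a \<Rightarrow> bool" where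
  "sum_degree_less f E u v \<longleftrightarrow> vertex_sum f E u < vertex_sum f E v \<and> degree E u \<le> degree E v"

lemma strongly_antimagic_labelingI:
  assumes "bij_betw f E {1..card E}"
    and comparable: "\<And>u v. u \<in> V \<Longrightarrow> v \<in> V \<Longrightarrow> u \<noteq> v \<Longrightarrow>
      sum_degree_less f E u v \<or> sum_degree_less f E v u"
  shows "strongly_antimagic_labeling V E f"
  unfolding strongly_antimagic_labeling_def
proof (intro conjI ballI impI)
  show "inj_on (vertex_sum f E) V"
    by (rule inj_onI) (use comparable in \<open>fastforce simp: sum_degree_less_def\<close>)
  fix u v assume "u \<in> V" "v \<in> V" "degree E u < degree E v"
  then show "vertex_sum f E u < vertex_sum f E v"
    using comparable[of u v] by (fastforce simp: sum_degree_less_def)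
qed (fact assms(1))

definition rank :: "('a \<Rightarrow> 'b::linorder) \<Rightarrow> 'a set \<Rightarrow> 'a \<Rightarrow> nat" where
  "rank \<phi> A v = card {w \<in> A. \<phi> w \<le> \<phi> v}"

lemma rank_strict_mono:
  assumes "finite A" "v \<in> A" "\<phi> u < \<phi> v"
  shows "rank \<phi> A u < rank \<phi> A v"
proof -
  have "{w \<in> A. \<phi> w \<le> \<phi> u} \<subseteq> {w \<in> A. \<phi> w \<le> \<phi> v}"
    using assms(3) by auto
  moreover have "v \<in> {w \<in> A. \<phi> w \<le> \<phi> v} - {w \<in> A. \<phi> w \<le> \<phi> u}"
    using assms(2,3) by auto
  ultimately have "{w \<in> A. \<phi> w \<le> \<phi> u} \<subset> {w \<in> A. \<phi> w \<le> \<phi> v}" by blast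
  then show ?thesis unfolding rank_def using assms(1) by (simp add: psubset_card_mono)
qed

lemma rank_bounds:
  assumes "finite A" "v \<in> A"
  shows "1 \<le> rank \<phi> A v" "rank \<phi> A v \<le> card A"
proof -
  have "v \<in> {w \<in> A. \<phi> w \<le> \<phi> v}" using assms(2) by simp
  then show "1 \<le> rank \<phi> A v"
    unfolding rank_def using assms(1) by (simp add: Suc_le_eq card_gt_0_iff) blast
  show "rank \<phi> A v \<le> card A" unfolding rank_def by (rule card_mono) (use assms in auto)
qed

lemma inj_on_rank:
  assumes "finite A" "inj_on \<phi> A"
  shows "inj_on (rank \<phi> A) A"
proof (rule inj_onI, rule ccontr)
  fix u v assume "u \<in> A" "v \<in> A" "rank \<phi> A u = rank \<phi> A v" "u \<noteq> v"
  moreover from \<open>u \<in> A\<close> \<open>v \<in> A\<close> \<open>u \<noteq> v\<close> have "\<phi> u < \<phi> v \<or> \<phi> v < \<phi> u"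
    using assms(2) by (metis inj_onD linorder_neqE)
  ultimately show False using rank_strict_mono[OF assms(1)] by (metis less_irrefl)
qed

lemma bij_betw_rank:
  assumes "finite A" "inj_on \<phi> A"
  shows "bij_betw (rank \<phi> A) A {1..card A}"
proof -
  have "rank \<phi> A ` A \<subseteq> {1..card A}" using rank_bounds[OF assms(1)] by auto
  moreover have "card (rank \<phi> A ` A) = card {1..card A}"
    using card_image[OF inj_on_rank[OF assms]] by simp
  ultimately have "rank \<phi> A ` A = {1..card A}" by (simp add: card_subset_eq)
  then show ?thesis using inj_on_rank[OF assms] by (simp add: bij_betw_def)
qed

locale pendant_extension =
  fixes V :: "'a set" and E :: "'a set set" and A :: "'a set" and p :: "'a \<Rightarrow> 'a"
  assumes graph: "simple_graph V E"
    and A_subset: "A \<subseteq> V"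
    and inj_p: "inj_on p A"
    and leaves_new: "p ` A \<inter> V = {}"
begin

abbreviation pendant :: "'a \<Rightarrow> 'a set" where
  "pendant v \<equiv> {v, p v}"

abbreviation ext_edges :: "'a set set" where
  "ext_edges \<equiv> E \<union> pendant ` A"

lemma finite_A: "finite A"
  using A_subset graph finite_subset by (auto simp: simple_graph_def)

lemma leaf_notin_V: "v \<in> A \<Longrightarrow> p v \<notin> V"
  using leaves_new by blast

lemma pendant_notin_edges: "v \<in> A \<Longrightarrow> pendant v \<notin> E"
  using simple_graph_edge_subset[OF graph] leaf_notin_V by blast

lemma inj_on_pendant: "inj_on pendant A"
proof (rule inj_onI)
  fix a b assume "a \<in> A" "b \<in> A" "pendant a = pendant b"
  then have "a = b \<or> a = p b" by (metis doubleton_eq_iff)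
  then show "a = b" using \<open>a \<in> A\<close> \<open>b \<in> A\<close> A_subset leaf_notin_V by blast
qed

lemma card_ext_edges: "card ext_edges = card E + card A"
proof -
  have "E \<inter> pendant ` A = {}" using pendant_notin_edges by blast
  then have "card ext_edges = card E + card (pendant ` A)"
    using simple_graph_finite_edges[OF graph] finite_A by (simp add: card_Un_disjoint)
  then show ?thesis by (simp add: card_image[OF inj_on_pendant])
qed

lemma incident_edges_ext_old:
  assumes "u \<in> V"
  shows "incident_edges ext_edges u = incident_edges E u \<union> (if u \<in> A then {pendant u} else {})"
proof -
  have "\<And>w. w \<in> A \<Longrightarrow> p w \<noteq> u" using assms leaf_notin_V by blast
  then have "{e \<in> pendant ` A. u \<in> e} = (if u \<in> A then {pendant u} else {})"
    by (auto split: if_splits)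
  moreover have "{e \<in> ext_edges. u \<in> e} = {e \<in> E. u \<in> e} \<union> {e \<in> pendant ` A. u \<in> e}"
    by blast
  ultimately show ?thesis unfolding incident_edges_def by simp
qed

lemma incident_edges_ext_leaf:
  assumes "v \<in> A"
  shows "incident_edges ext_edges (p v) = {pendant v}"
proof -
  have "e = pendant v" if e: "e \<in> ext_edges" "p v \<in> e" for e
  proof -
    have "e \<notin> E" using e(2) simple_graph_edge_subset[OF graph] leaf_notin_V[OF assms] by blast
    then obtain w where w: "w \<in> A" "e = pendant w" using e(1) by blast
    moreover have "p v \<noteq> w" using w(1) A_subset leaf_notin_V[OF assms] by blast
    ultimately show ?thesis using e(2) assms inj_p by (auto dest: inj_onD)
  qed
  moreover have "pendant v \<in> ext_edges" using assms by blast
  ultimately show ?thesis unfolding incident_edges_def by blast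
qed

lemma pendant_notin_incident_edges: "u \<in> A \<Longrightarrow> pendant u \<notin> incident_edges E u"
  by (simp add: incident_edges_def pendant_notin_edges)

lemma degree_ext_old:
  assumes "u \<in> V"
  shows "degree ext_edges u = degree E u + (if u \<in> A then 1 else 0)"
  using incident_edges_ext_old[OF assms] pendant_notin_incident_edges
    finite_incident_edges[OF simple_graph_finite_edges[OF graph]]
  by (simp add: degree_def)

lemma degree_ext_leaf: "v \<in> A \<Longrightarrow> degree ext_edges (p v) = 1"
  by (simp add: degree_def incident_edges_ext_leaf)

lemma vertex_sum_ext_old:
  assumes "u \<in> V"
  shows "vertex_sum F ext_edges u = vertex_sum F E u + (if u \<in> A then F (pendant u) else 0)"
  using incident_edges_ext_old[OF assms] pendant_notin_incident_edges
    finite_incident_edges[OF simple_graph_finite_edges[OF graph]]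
  by (simp add: vertex_sum_def)

lemma vertex_sum_ext_leaf: "v \<in> A \<Longrightarrow> vertex_sum F ext_edges (p v) = F (pendant v)"
  by (simp add: vertex_sum_def incident_edges_ext_leaf)

lemma bij_betw_combined_labeling:
  assumes "bij_betw f E {1..card E}" and "bij_betw g A {1..card A}"
  shows "bij_betw (\<lambda>e. if e \<in> E then f e + card A else g (inv_into A pendant e))
           ext_edges {1..card ext_edges}"
proof -
  have "bij_betw (\<lambda>n. n + card A) {1..card E} {card A + 1..card A + card E}"
    by (simp add: bij_betw_def inj_on_def add.commute)
  from bij_betw_trans[OF assms(1) this]
  have "bij_betw (\<lambda>e. f e + card A) E {card A + 1..card A + card E}" by (simp add: comp_def)
  then have old: "bij_betw (\<lambda>e. if e \<in> E then f e + card A else g (inv_into A pendant e))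
      E {card A + 1..card A + card E}"
    by (rule bij_betw_cong[THEN iffD1, rotated]) simp
  have "bij_betw (g \<circ> inv_into A pendant) (pendant ` A) {1..card A}"
    using bij_betw_trans[OF bij_betw_inv_into[OF inj_on_imp_bij_betw[OF inj_on_pendant]] assms(2)] .
  then have new: "bij_betw (\<lambda>e. if e \<in> E then f e + card A else g (inv_into A pendant e))
      (pendant ` A) {1..card A}"
    by (rule bij_betw_cong[THEN iffD1, rotated]) (auto simp: pendant_notin_edges)
  have labels: "{card A + 1..card A + card E} \<union> {1..card A} = {1..card ext_edges}"
    using card_ext_edges by auto
  show ?thesis unfolding labels[symmetric] by (rule bij_betw_combine[OF old new]) auto
qed

end

locale degree_class_pendants = pendant_extension +
  fixes k :: nat and f :: "'a set \<Rightarrow> nat"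
  assumes A_eq: "A = {v \<in> V. degree E v = k}"
    and k_pos: "1 \<le> k"
    and labeling: "strongly_antimagic_labeling V E f"
begin

abbreviation old_sum :: "'a \<Rightarrow> nat" where
  "old_sum \<equiv> vertex_sum f E"

definition ext_labeling :: "'a set \<Rightarrow> nat" where
  "ext_labeling e = (if e \<in> E then f e + card A else rank old_sum A (inv_into A pendant e))"

abbreviation new_sum :: "'a \<Rightarrow> nat" where
  "new_sum \<equiv> vertex_sum ext_labeling ext_edges"

abbreviation new_degree :: "'a \<Rightarrow> nat" where
  "new_degree \<equiv> degree ext_edges"

lemma old_sum_inj: "inj_on old_sum V"
  and old_sum_less: "u \<in> V \<Longrightarrow> v \<in> V \<Longrightarrow> degree E u < degree E v \<Longrightarrow> old_sum u < old_sum v"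
  and label_bij: "bij_betw f E {1..card E}"
  using labeling by (auto simp: strongly_antimagic_labeling_def)

lemma ext_labeling_bij: "bij_betw ext_labeling ext_edges {1..card ext_edges}"
  unfolding ext_labeling_def
  by (rule bij_betw_combined_labeling[OF label_bij bij_betw_rank[OF finite_A inj_on_subset[OF old_sum_inj A_subset]]])

lemma ext_labeling_pendant: "v \<in> A \<Longrightarrow> ext_labeling (pendant v) = rank old_sum A v"
  by (simp add: ext_labeling_def pendant_notin_edges inv_into_f_f[OF inj_on_pendant])

lemma new_sum_old:
  assumes "u \<in> V"
  shows "new_sum u = old_sum u + card A * degree E u + (if u \<in> A then rank old_sum A u else 0)"
proof -
  have "vertex_sum ext_labeling E u = vertex_sum (\<lambda>e. f e + card A) E u"
    unfolding vertex_sum_def by (rule sum.cong) (auto simp: ext_labeling_def incident_edges_def)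
  then show ?thesis
    using vertex_sum_ext_old[OF assms] ext_labeling_pendant by (simp add: vertex_sum_add_const)
qed

lemma new_sum_leaf: "v \<in> A \<Longrightarrow> new_sum (p v) = rank old_sum A v"
  by (simp add: vertex_sum_ext_leaf ext_labeling_pendant)

lemma rank_le_card: "v \<in> A \<Longrightarrow> rank old_sum A v \<le> card A"
  and rank_pos: "v \<in> A \<Longrightarrow> 1 \<le> rank old_sum A v"
  using rank_bounds[OF finite_A] by auto

lemma old_less_by_degree:
  assumes "u \<in> V" "v \<in> V" "degree E u < degree E v"
  shows "sum_degree_less ext_labeling ext_edges u v"
proof -
  have "card A * degree E u + (if u \<in> A then rank old_sum A u else 0) \<le> card A * degree E v"
  proof -
    have "card A * degree E u + card A \<le> card A * degree E v"
      using mult_le_mono2[of "Suc (degree E u)" "degree E v" "card A"] assms(3) by simp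
    moreover have "(if u \<in> A then rank old_sum A u else 0) \<le> card A"
      using rank_le_card[of u] by simp
    ultimately show ?thesis by linarith
  qed
  then show ?thesis
    using old_sum_less[OF assms] new_sum_old[OF assms(1)] new_sum_old[OF assms(2)]
      degree_ext_old[OF assms(1)] degree_ext_old[OF assms(2)] assms(3)
    by (simp add: sum_degree_less_def)
qed

lemma old_less_same_degree:
  assumes "u \<in> V" "v \<in> V" "degree E u = degree E v" "old_sum u < old_sum v"
  shows "sum_degree_less ext_labeling ext_edges u v"
proof -
  have "u \<in> A \<longleftrightarrow> v \<in> A" using A_eq assms(1-3) by simp
  moreover have "u \<in> A \<Longrightarrow> rank old_sum A u < rank old_sum A v"
    using rank_strict_mono[OF finite_A _ assms(4)] calculation by blast
  ultimately show ?thesis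
    using assms new_sum_old[OF assms(1)] new_sum_old[OF assms(2)]
      degree_ext_old[OF assms(1)] degree_ext_old[OF assms(2)]
    by (auto simp: sum_degree_less_def)
qed

lemma old_comparable:
  assumes "u \<in> V" "v \<in> V" "u \<noteq> v"
  shows "sum_degree_less ext_labeling ext_edges u v \<or> sum_degree_less ext_labeling ext_edges v u"
proof -
  have "old_sum u \<noteq> old_sum v" using old_sum_inj assms by (auto dest: inj_onD)
  then consider "degree E u < degree E v" | "degree E v < degree E u"
    | "degree E u = degree E v" "old_sum u < old_sum v"
    | "degree E u = degree E v" "old_sum v < old_sum u"
    by linarith
  then show ?thesis
    using old_less_by_degree old_less_same_degree assms by cases metis+
qed

lemma leaf_less_old:
  assumes "v \<in> A" "u \<in> V" "degree E u \<noteq> 0"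
  shows "sum_degree_less ext_labeling ext_edges (p v) u"
proof -
  have "card A \<le> card A * degree E u" using assms(3) by simp
  moreover have "degree E u \<le> old_sum u"
    by (rule degree_le_vertex_sum[OF simple_graph_finite_edges[OF graph]])
      (use bij_betw_apply[OF label_bij] in fastforce)
  moreover have "old_sum u + card A * degree E u \<le> new_sum u"
    using new_sum_old[OF assms(2)] by simp
  ultimately have "card A < new_sum u" using assms(3) by linarith
  then show ?thesis
    using rank_le_card[OF assms(1)] new_sum_leaf[OF assms(1)] degree_ext_leaf[OF assms(1)]
      degree_ext_old[OF assms(2)] assms(3)
    by (simp add: sum_degree_less_def)
qed

lemma isolated_less_leaf:
  assumes "v \<in> A" "u \<in> V" "degree E u = 0"
  shows "sum_degree_less ext_labeling ext_edges u (p v)"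
proof -
  have "u \<notin> A" using A_eq k_pos assms(3) by auto
  then show ?thesis
    using new_sum_old[OF assms(2)] degree_ext_old[OF assms(2)] new_sum_leaf[OF assms(1)]
      degree_ext_leaf[OF assms(1)] rank_pos[OF assms(1)] assms(3)
      vertex_sum_degree_0[OF simple_graph_finite_edges[OF graph]]
    by (simp add: sum_degree_less_def)
qed

lemma leaves_comparable:
  assumes "v \<in> A" "w \<in> A" "v \<noteq> w"
  shows "sum_degree_less ext_labeling ext_edges (p v) (p w) \<or>
    sum_degree_less ext_labeling ext_edges (p w) (p v)"
proof -
  have "rank old_sum A v \<noteq> rank old_sum A w"
    using inj_on_rank[OF finite_A inj_on_subset[OF old_sum_inj A_subset]] assms
    by (auto dest: inj_onD)
  then show ?thesis
    using assms new_sum_leaf degree_ext_leaf by (auto simp: sum_degree_less_def)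
qed

lemma ext_labeling_strongly_antimagic:
  "strongly_antimagic_labeling (V \<union> p ` A) ext_edges ext_labeling"
proof (rule strongly_antimagic_labelingI[OF ext_labeling_bij])
  have leaf_old: "sum_degree_less ext_labeling ext_edges (p v) u \<or>
      sum_degree_less ext_labeling ext_edges u (p v)" if "v \<in> A" "u \<in> V" for u v
    using leaf_less_old[OF that] isolated_less_leaf[OF that] by blast
  fix a b assume "a \<in> V \<union> p ` A" "b \<in> V \<union> p ` A" "a \<noteq> b"
  then show "sum_degree_less ext_labeling ext_edges a b \<or> sum_degree_less ext_labeling ext_edges b a"
    using old_comparable leaf_old leaves_comparable by blast
qed

end

theorem theorem8:
  fixes V :: "'a set" and E :: "'a set set" and k :: nat and p :: "'a \<Rightarrow> 'a"
  assumes "simple_graph V E"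
    and "strongly_antimagic V E"
    and "k \<ge> 1"
    and "inj_on p {v \<in> V. degree E v = k}"
    and "p ` {v \<in> V. degree E v = k} \<inter> V = {}"
  shows "strongly_antimagic (V \<union> p ` {v \<in> V. degree E v = k})
           (E \<union> (\<lambda>v. {v, p v}) ` {v \<in> V. degree E v = k})"
proof -
  obtain f where "strongly_antimagic_labeling V E f"
    using assms(2) unfolding strongly_antimagic_def by blast
  then interpret degree_class_pendants V E "{v \<in> V. degree E v = k}" p k f
    using assms by unfold_locales auto
  show ?thesis
    unfolding strongly_antimagic_def using ext_labeling_strongly_antimagic by blast
qed

end
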